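(* Let $\Omega=\{r<0\}\subset\mathbb C^2$ with $r$ a smooth defining function that is plurisubharmonic on the boundary. Let $X$ be a smooth real-valued function, $P=1+X$, $K\in\mathbb R$, and $\rho=r(1+Kr+X)$. If $p\in b\Omega$ is a weakly pseudoconvex point (i.e. $\mathcal L_r(p)=0$) and the complex Hessian of $\rho$ is positive semidefinite at $p$, then $$B_P(p)=\big(4\,\mathrm{Re}[r_zP_{\bar z}]\,\mathrm{Re}[r_wP_{\bar w}]-|r_zP_{\bar w}+r_{\bar w}P_z|^2\big)\big|_p=0.$$
   Context: Coordinates $(z,w)$ on $\mathbb C^2$; subscripts denote partial derivatives; $b\Omega=\{r=0\}$ with $\nabla r\neq0$ there. For real $C^2$ $f$, $H_f=\begin{pmatrix} f_{z\bar z}& f_{z\bar w}\\ f_{\bar z w}& f_{w\bar w}\end{pmatrix}$, acting on $V,W\in\mathbb C^2$ by $H_f(V,W)=f_{z\bar z}V_1\bar W_1+f_{w\bar w}V_2\bar W_2+f_{z\bar w}V_1\bar W_2+f_{\bar z w}V_2\bar W_1$. $L_r$ is the vector $(r_w,-r_z)$ and the Levi form is $\mathcal L_r(p)=H_r(L_r,L_r)(p)$. "$r$ plurisubharmonic on the boundary" means $H_r(p)$ is positive semidefinite for all $p\in b\Omega$. *)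

theory Defs
  imports "HOL-Analysis.Analysis"
begin

text \<open>Points of C^2 are pairs (z,w) :: complex \<times> complex, viewed as a real vector space.\<close>

fun Ck :: "nat \<Rightarrow> ('a::real_normed_vector \<Rightarrow> 'b::real_normed_vector) \<Rightarrow> bool" where
  "Ck 0 f = continuous_on UNIV f"
| "Ck (Suc k) f = ((\<forall>x. f differentiable (at x)) \<and>
      (\<forall>v. Ck k (\<lambda>x. frechet_derivative f (at x) v)))"

definition smooth :: "('a::real_normed_vector \<Rightarrow> 'b::real_normed_vector) \<Rightarrow> bool" where
  "smooth f \<longleftrightarrow> (\<forall>k. Ck k f)"

definition dirD :: "(complex \<times> complex \<Rightarrow> complex) \<Rightarrow> complex \<times> complex \<Rightarrow> complex \<times> complex \<Rightarrow> complex" where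
  "dirD g v p = frechet_derivative g (at p) v"

text \<open>Wirtinger derivatives: with z = x1 + i y1, w = x2 + i y2.\<close>
definition Dz :: "(complex \<times> complex \<Rightarrow> complex) \<Rightarrow> complex \<times> complex \<Rightarrow> complex" where
  "Dz g p = (dirD g (1,0) p - \<i> * dirD g (\<i>,0) p) / 2"
definition Dzbar :: "(complex \<times> complex \<Rightarrow> complex) \<Rightarrow> complex \<times> complex \<Rightarrow> complex" where
  "Dzbar g p = (dirD g (1,0) p + \<i> * dirD g (\<i>,0) p) / 2"
definition Dw :: "(complex \<times> complex \<Rightarrow> complex) \<Rightarrow> complex \<times> complex \<Rightarrow> complex" where
  "Dw g p = (dirD g (0,1) p - \<i> * dirD g (0,\<i>) p) / 2"
definition Dwbar :: "(complex \<times> complex \<Rightarrow> complex) \<Rightarrow> complex \<times> complex \<Rightarrow> complex" where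
  "Dwbar g p = (dirD g (0,1) p + \<i> * dirD g (0,\<i>) p) / 2"

definition cf :: "(complex \<times> complex \<Rightarrow> real) \<Rightarrow> complex \<times> complex \<Rightarrow> complex" where
  "cf f = (\<lambda>p. complex_of_real (f p))"

definition cHess :: "(complex \<times> complex \<Rightarrow> real) \<Rightarrow> complex \<times> complex \<Rightarrow> complex \<times> complex \<Rightarrow> complex \<times> complex \<Rightarrow> complex" where
  "cHess f p V W =
     Dz (Dzbar (cf f)) p * fst V * cnj (fst W)
   + Dw (Dwbar (cf f)) p * snd V * cnj (snd W)
   + Dz (Dwbar (cf f)) p * fst V * cnj (snd W)
   + Dzbar (Dw (cf f)) p * snd V * cnj (fst W)"

definition hess_psd :: "(complex \<times> complex \<Rightarrow> real) \<Rightarrow> complex \<times> complex \<Rightarrow> bool" where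
  "hess_psd f p \<longleftrightarrow> (\<forall>V. Im (cHess f p V V) = 0 \<and> 0 \<le> Re (cHess f p V V))"

definition Lvec :: "(complex \<times> complex \<Rightarrow> real) \<Rightarrow> complex \<times> complex \<Rightarrow> complex \<times> complex" where
  "Lvec r p = (Dw (cf r) p, - Dz (cf r) p)"

definition levi :: "(complex \<times> complex \<Rightarrow> real) \<Rightarrow> complex \<times> complex \<Rightarrow> complex" where
  "levi r p = cHess r p (Lvec r p) (Lvec r p)"

definition BP :: "(complex \<times> complex \<Rightarrow> real) \<Rightarrow> (complex \<times> complex \<Rightarrow> real) \<Rightarrow> complex \<times> complex \<Rightarrow> real" where
  "BP r P p =
     4 * Re (Dz (cf r) p * Dzbar (cf P) p) * Re (Dw (cf r) p * Dwbar (cf P) p)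
     - (cmod (Dz (cf r) p * Dwbar (cf P) p + Dwbar (cf r) p * Dz (cf P) p))\<^sup>2"

end

theory Submission
  imports Defs
begin

text \<open>
  On the boundary \<open>\<rho> = r Q\<close> with \<open>Q = 1 + K r + X\<close>, so at \<open>p\<close> the complex Hessian of \<open>\<rho>\<close> is
  \<open>Q H\<^sub>r + \<partial>r \<otimes> conj \<partial>Q + \<partial>Q \<otimes> conj \<partial>r\<close>. The vector \<open>L = (r\<^sub>w, -r\<^sub>z)\<close> is complex tangent
  (\<open>\<partial>r(L) = 0\<close>) and, \<open>p\<close> being weakly pseudoconvex, null for the semidefinite form \<open>H\<^sub>r\<close>; hence it
  is null for \<open>H\<^sub>\<rho>\<close> as well. A null vector of a positive semidefinite Hermitian form lies in its
  kernel, so \<open>H\<^sub>\<rho>(L, \<cdot>) = \<partial>Q(L) conj \<partial>r(\<cdot>)\<close> vanishes, which forces \<open>\<partial>P(L) = \<partial>Q(L) = 0\<close>. Thus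
  \<open>(P\<^sub>z, P\<^sub>w)\<close> is proportional to \<open>(r\<^sub>z, r\<^sub>w)\<close>, and for proportional gradients \<open>B\<^sub>P\<close> is zero.
\<close>

text \<open>First derivatives are required to exist everywhere, as in \<^const>\<open>Ck\<close>.\<close>
definition twice_differentiable_at :: "('a::real_normed_vector \<Rightarrow> 'b::real_normed_vector) \<Rightarrow> 'a \<Rightarrow> bool" where
  "twice_differentiable_at f p \<longleftrightarrow>
     (\<forall>x. f differentiable at x) \<and> (\<forall>v. (\<lambda>x. frechet_derivative f (at x) v) differentiable at p)"

definition frechet_derivative2 :: "('a::real_normed_vector \<Rightarrow> 'b::real_normed_vector) \<Rightarrow> 'a \<Rightarrow> 'a \<Rightarrow> 'a \<Rightarrow> 'b" where
  "frechet_derivative2 f p u v = frechet_derivative (\<lambda>x. frechet_derivative f (at x) v) (at p) u"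

lemma twice_differentiable_at_imp_differentiable:
  "twice_differentiable_at f p \<Longrightarrow> f differentiable at x"
  by (simp add: twice_differentiable_at_def)

lemma smooth_imp_twice_differentiable_at:
  assumes "smooth f" shows "twice_differentiable_at f p"
proof -
  have "Ck 2 f" using assms by (simp add: smooth_def)
  then show ?thesis by (simp add: twice_differentiable_at_def numeral_2_eq_2)
qed

lemma frechet_derivative_add:
  assumes "f differentiable at x" "g differentiable at x"
  shows "frechet_derivative (\<lambda>y. f y + g y) (at x) =
    (\<lambda>v. frechet_derivative f (at x) v + frechet_derivative g (at x) v)"
  using assms by (intro frechet_derivative_at[symmetric] has_derivative_add) (simp_all add: frechet_derivative_works)

lemma frechet_derivative_mult:
  fixes f g :: "'a::real_normed_vector \<Rightarrow> 'b::real_normed_algebra"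
  assumes "f differentiable at x" "g differentiable at x"
  shows "frechet_derivative (\<lambda>y. f y * g y) (at x) =
    (\<lambda>v. f x * frechet_derivative g (at x) v + frechet_derivative f (at x) v * g x)"
  using assms by (intro frechet_derivative_at[symmetric] has_derivative_mult) (simp_all add: frechet_derivative_works)

lemma twice_differentiable_at_const: "twice_differentiable_at (\<lambda>x. c) p"
  by (simp add: twice_differentiable_at_def)

lemma twice_differentiable_at_add:
  assumes "twice_differentiable_at f p" "twice_differentiable_at g p"
  shows "twice_differentiable_at (\<lambda>x. f x + g x) p"
  using assms by (auto simp: twice_differentiable_at_def frechet_derivative_add)

lemma twice_differentiable_at_mult:
  fixes f g :: "'a::real_normed_vector \<Rightarrow> 'b::real_normed_algebra"
  assumes "twice_differentiable_at f p" "twice_differentiable_at g p"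
  shows "twice_differentiable_at (\<lambda>x. f x * g x) p"
  using assms by (auto simp: twice_differentiable_at_def frechet_derivative_mult)

lemma frechet_derivative2_mult:
  fixes f g :: "'a::real_normed_vector \<Rightarrow> 'b::real_normed_algebra"
  assumes "twice_differentiable_at f p" "twice_differentiable_at g p"
  shows "frechet_derivative2 (\<lambda>x. f x * g x) p u v =
      f p * frechet_derivative2 g p u v + frechet_derivative f (at p) u * frechet_derivative g (at p) v
    + frechet_derivative f (at p) v * frechet_derivative g (at p) u + frechet_derivative2 f p u v * g p"
proof -
  have f1: "\<And>x. f differentiable at x" and g1: "\<And>x. g differentiable at x"
    and f2: "\<And>v. (\<lambda>x. frechet_derivative f (at x) v) differentiable at p"
    and g2: "\<And>v. (\<lambda>x. frechet_derivative g (at x) v) differentiable at p"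
    using assms by (auto simp: twice_differentiable_at_def)
  have "frechet_derivative (\<lambda>x. f x * frechet_derivative g (at x) v + frechet_derivative f (at x) v * g x) (at p) u
      = f p * frechet_derivative2 g p u v + frechet_derivative f (at p) u * frechet_derivative g (at p) v
      + (frechet_derivative f (at p) v * frechet_derivative g (at p) u + frechet_derivative2 f p u v * g p)"
    using f1 g1 f2 g2
    by (simp add: frechet_derivative_add frechet_derivative_mult frechet_derivative2_def)
  then show ?thesis
    by (simp add: frechet_derivative2_def frechet_derivative_mult f1 g1 add.assoc)
qed

text \<open>Lets the four second-order Wirtinger derivatives in \<^const>\<open>cHess\<close> be treated uniformly.\<close>
definition wirtinger ::
  "complex \<times> complex \<Rightarrow> complex \<times> complex \<Rightarrow> complex \<Rightarrow>
    (complex \<times> complex \<Rightarrow> complex) \<Rightarrow> complex \<times> complex \<Rightarrow> complex"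
  where "wirtinger a b s g p = (dirD g a p + s * dirD g b p) / 2"

lemma Dz_eq_wirtinger: "Dz = wirtinger (1,0) (\<i>,0) (-\<i>)"
  and Dzbar_eq_wirtinger: "Dzbar = wirtinger (1,0) (\<i>,0) \<i>"
  and Dw_eq_wirtinger: "Dw = wirtinger (0,1) (0,\<i>) (-\<i>)"
  and Dwbar_eq_wirtinger: "Dwbar = wirtinger (0,1) (0,\<i>) \<i>"
  by (simp_all add: fun_eq_iff Dz_def Dzbar_def Dw_def Dwbar_def wirtinger_def)

lemma dirD_cf:
  assumes "f differentiable at p"
  shows "dirD (cf f) u p = of_real (frechet_derivative f (at p) u)"
proof -
  have "(cf f has_derivative (\<lambda>u. of_real (frechet_derivative f (at p) u))) (at p)"
    unfolding cf_def using assms by (intro has_derivative_of_real) (simp add: frechet_derivative_works)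
  then show ?thesis by (simp add: dirD_def frechet_derivative_at[symmetric])
qed

lemma wirtinger_cf:
  assumes "f differentiable at p"
  shows "wirtinger a b s (cf f) p =
    (of_real (frechet_derivative f (at p) a) + s * of_real (frechet_derivative f (at p) b)) / 2"
  using assms by (simp add: wirtinger_def dirD_cf)

lemma wirtinger_wirtinger_cf:
  assumes "twice_differentiable_at f p"
  shows "wirtinger a1 a2 s (wirtinger b1 b2 t (cf f)) p =
    (of_real (frechet_derivative2 f p a1 b1) + t * of_real (frechet_derivative2 f p a1 b2)
     + s * (of_real (frechet_derivative2 f p a2 b1) + t * of_real (frechet_derivative2 f p a2 b2))) / 4"
proof -
  have f1: "\<And>x. f differentiable at x"
    and f2: "\<And>v. (\<lambda>x. frechet_derivative f (at x) v) differentiable at p"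
    using assms by (auto simp: twice_differentiable_at_def)
  have inner: "wirtinger b1 b2 t (cf f) =
      (\<lambda>x. (of_real (frechet_derivative f (at x) b1) + t * of_real (frechet_derivative f (at x) b2)) / 2)"
    by (rule ext) (simp add: wirtinger_cf f1)
  have "dirD (wirtinger b1 b2 t (cf f)) u p =
      (of_real (frechet_derivative2 f p u b1) + t * of_real (frechet_derivative2 f p u b2)) / 2" for u
  proof -
    have "((\<lambda>x. (of_real (frechet_derivative f (at x) b1) + t * of_real (frechet_derivative f (at x) b2)) / 2)
        has_derivative (\<lambda>u. (of_real (frechet_derivative2 f p u b1) + t * of_real (frechet_derivative2 f p u b2)) / 2)) (at p)"
      unfolding frechet_derivative2_def
      by (intro bounded_linear.has_derivative[OF bounded_linear_divide] has_derivative_add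
            has_derivative_mult_right has_derivative_of_real) (simp_all add: f2[unfolded frechet_derivative_works])
    then show ?thesis unfolding inner dirD_def by (simp add: frechet_derivative_at[symmetric])
  qed
  then show ?thesis by (simp only: wirtinger_def) (simp add: field_simps)
qed

lemma Dzbar_cf: "f differentiable at p \<Longrightarrow> Dzbar (cf f) p = cnj (Dz (cf f) p)"
  and Dwbar_cf: "f differentiable at p \<Longrightarrow> Dwbar (cf f) p = cnj (Dw (cf f) p)"
  by (simp_all add: Dz_eq_wirtinger Dzbar_eq_wirtinger Dw_eq_wirtinger Dwbar_eq_wirtinger wirtinger_cf)

lemma wirtinger_wirtinger_cf_mult_at_zero:
  assumes f: "twice_differentiable_at f p" and g: "twice_differentiable_at g p" and "f p = 0"
  shows "wirtinger a1 a2 s (wirtinger b1 b2 t (cf (\<lambda>x. f x * g x))) p =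
      of_real (g p) * wirtinger a1 a2 s (wirtinger b1 b2 t (cf f)) p
    + wirtinger a1 a2 s (cf f) p * wirtinger b1 b2 t (cf g) p
    + wirtinger b1 b2 t (cf f) p * wirtinger a1 a2 s (cf g) p"
proof -
  have "f differentiable at p" "g differentiable at p"
    using f g by (simp_all add: twice_differentiable_at_imp_differentiable)
  then show ?thesis
    using assms
    by (simp add: wirtinger_wirtinger_cf twice_differentiable_at_mult wirtinger_cf frechet_derivative2_mult)
       (simp add: field_simps)
qed

definition cdel ::
  "(complex \<times> complex \<Rightarrow> real) \<Rightarrow> complex \<times> complex \<Rightarrow> complex \<times> complex \<Rightarrow> complex" where
  "cdel f p V = Dz (cf f) p * fst V + Dw (cf f) p * snd V"

lemma cHess_mult_at_zero:
  assumes f: "twice_differentiable_at f p" and g: "twice_differentiable_at g p" and "f p = 0"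
  shows "cHess (\<lambda>x. f x * g x) p V U =
    of_real (g p) * cHess f p V U + cdel f p V * cnj (cdel g p U) + cdel g p V * cnj (cdel f p U)"
proof -
  have "f differentiable at p" "g differentiable at p"
    using f g by (simp_all add: twice_differentiable_at_imp_differentiable)
  note conj = Dzbar_cf[OF this(1)] Dwbar_cf[OF this(1)] Dzbar_cf[OF this(2)] Dwbar_cf[OF this(2)]
  have expand: "D1 (D2 (cf (\<lambda>x. f x * g x))) p =
      of_real (g p) * D1 (D2 (cf f)) p + D1 (cf f) p * D2 (cf g) p + D2 (cf f) p * D1 (cf g) p"
    if "D1 = wirtinger a1 a2 s" "D2 = wirtinger b1 b2 t" for D1 D2 a1 a2 s b1 b2 t
    unfolding that by (rule wirtinger_wirtinger_cf_mult_at_zero[OF assms])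
  note expand = expand[OF Dz_eq_wirtinger Dzbar_eq_wirtinger] expand[OF Dw_eq_wirtinger Dwbar_eq_wirtinger]
    expand[OF Dz_eq_wirtinger Dwbar_eq_wirtinger] expand[OF Dzbar_eq_wirtinger Dw_eq_wirtinger]
  show ?thesis
    unfolding cHess_def expand conj cdel_def by (simp add: algebra_simps)
qed

lemma linear_coeff_zero_if_quadratic_nonneg:
  fixes a e :: real
  assumes nonneg: "\<And>t. 0 \<le> t * a + t\<^sup>2 * e"
  shows "a = 0"
proof (rule ccontr)
  assume "a \<noteq> 0"
  define m where "m = \<bar>e\<bar> + 1"
  have m: "m > 0" by (simp add: m_def)
  have "0 \<le> (- a / m) * a + (- a / m)\<^sup>2 * e" by (rule nonneg)
  moreover have "(- a / m)\<^sup>2 * e \<le> (- a / m)\<^sup>2 * (m - 1)"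
    by (intro mult_left_mono) (simp_all add: m_def)
  moreover have "(- a / m) * a + (- a / m)\<^sup>2 * (m - 1) = - (a\<^sup>2 / m\<^sup>2)"
    using m by (simp add: field_simps power2_eq_square)
  moreover have "a\<^sup>2 / m\<^sup>2 > 0" using \<open>a \<noteq> 0\<close> m by simp
  ultimately show False by linarith
qed

lemma complex_linear_coeff_zero_if_quadratic_nonneg:
  fixes Z E :: complex
  assumes nonneg: "\<And>t::real. Im (t * Z + t\<^sup>2 * E) = 0 \<and> 0 \<le> Re (t * Z + t\<^sup>2 * E)"
  shows "Z = 0"
proof -
  have "Re Z = 0"
    using nonneg by (intro linear_coeff_zero_if_quadratic_nonneg[where e = "Re E"]) simp
  moreover have "Im Z + Im E = 0" "- Im Z + Im E = 0"
    using nonneg[of 1] nonneg[of "-1"] by simp_all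
  ultimately show ?thesis by (simp add: complex_eq_iff)
qed

lemma cHess_expand:
  "cHess f p (fst L + t * fst V, snd L + t * snd V) (fst L + t * fst V, snd L + t * snd V) =
   cHess f p L L + cnj t * cHess f p L V + t * cHess f p V L + t * cnj t * cHess f p V V"
  unfolding cHess_def by (simp add: algebra_simps)

lemma hess_psd_null_vector:
  assumes psd: "hess_psd f p" and null: "cHess f p L L = 0"
  shows "cHess f p L V = 0"
proof -
  let ?H = "cHess f p"
  txt \<open>Along \<open>L + c s V\<close> with \<open>c = 1\<close> and \<open>c = \<i>\<close> the form is \<open>s Z + s\<^sup>2 H(V,V) \<ge> 0\<close>,
    so \<open>Z = 0\<close>.\<close>
  have along: "Im (of_real s * Z + (of_real s)\<^sup>2 * ?H V V) = 0 \<and>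
      0 \<le> Re (of_real s * Z + (of_real s)\<^sup>2 * ?H V V)"
    if "Z = cnj c * ?H L V + c * ?H V L" "cnj c * c = 1" for Z c :: complex and s :: real
  proof -
    let ?W = "(fst L + (c * s) * fst V, snd L + (c * s) * snd V)"
    have "?H ?W ?W = of_real s * Z + (of_real s)\<^sup>2 * ?H V V"
      unfolding cHess_expand null that(1) using that(2)
      by (simp add: algebra_simps power2_eq_square)
    then show ?thesis using psd unfolding hess_psd_def by metis
  qed
  have "?H L V + ?H V L = 0"
    by (rule complex_linear_coeff_zero_if_quadratic_nonneg, rule along[where c = 1]) simp_all
  moreover have "- \<i> * ?H L V + \<i> * ?H V L = 0"
    by (rule complex_linear_coeff_zero_if_quadratic_nonneg, rule along[where c = \<i>]) simp_all
  ultimately show ?thesis by (simp add: algebra_simps)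
qed

lemma Re_cdel:
  assumes "f differentiable at p"
  shows "Re (cdel f p V) = frechet_derivative f (at p) V / 2"
proof -
  let ?R = "frechet_derivative f (at p)"
  have lin: "linear ?R" using assms by (rule linear_frechet_derivative)
  have "?R V = ?R ((Re (fst V) *\<^sub>R (1,0) + Im (fst V) *\<^sub>R (\<i>,0))
                 + (Re (snd V) *\<^sub>R (0,1) + Im (snd V) *\<^sub>R (0,\<i>)))"
    by (rule arg_cong[where f = ?R]) (simp add: prod_eq_iff complex_eq_iff)
  also have "\<dots> = Re (fst V) * ?R (1,0) + Im (fst V) * ?R (\<i>,0)
                 + (Re (snd V) * ?R (0,1) + Im (snd V) * ?R (0,\<i>))"
    by (simp only: linear_add[OF lin] linear_scale[OF lin] real_scaleR_def)
  finally have "?R V = \<dots>" .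
  then show ?thesis
    using assms by (simp add: cdel_def Dz_eq_wirtinger Dw_eq_wirtinger wirtinger_cf field_simps)
qed

lemma frechet_derivative_eq_0_if_Dz_Dw_eq_0:
  assumes "f differentiable at p" "Dz (cf f) p = 0" "Dw (cf f) p = 0"
  shows "frechet_derivative f (at p) = (\<lambda>v. 0)"
proof
  fix V
  have "cdel f p V = 0" using assms by (simp add: cdel_def)
  then show "frechet_derivative f (at p) V = 0" using Re_cdel[OF assms(1), of V] by simp
qed

lemma cdel_add_scaled:
  assumes "f differentiable at p" "g differentiable at p"
  shows "cdel (\<lambda>x. f x + c * g x) p V = cdel f p V + of_real c * cdel g p V"
proof -
  have "(\<lambda>x. c * g x) differentiable at p" using assms by simp
  then show ?thesis
    using assms by (simp add: cdel_def Dz_eq_wirtinger Dw_eq_wirtinger wirtinger_cf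
        frechet_derivative_add frechet_derivative_mult field_simps)
qed

lemma B_form_eq_0_if_proportional:
  fixes a b c d :: complex
  assumes "(a, b) \<noteq> (0, 0)" and "c * b = d * a"
  shows "4 * Re (a * cnj c) * Re (b * cnj d) - (cmod (a * cnj d + cnj b * c))\<^sup>2 = 0"
proof -
  obtain l where "c = l * a" "d = l * b"
  proof (cases "a = 0")
    case True
    then show ?thesis using assms by (intro that[of "d / b"]) auto
  next
    case False
    then show ?thesis using assms by (intro that[of "c / a"]) (auto simp: field_simps)
  qed
  then show ?thesis unfolding cmod_power2 by (simp add: power2_eq_square algebra_simps)
qed

lemma cnj_mult_self_add_ne_0:
  fixes a b :: complex
  assumes "(a, b) \<noteq> (0, 0)"
  shows "cnj a * a + cnj b * b \<noteq> 0"
proof -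
  have "Re (cnj a * a + cnj b * b) = (cmod a)\<^sup>2 + (cmod b)\<^sup>2"
    unfolding cmod_power2 by (simp add: power2_eq_square)
  also have "\<dots> > 0" using assms by (auto simp: add_pos_nonneg add_nonneg_pos)
  finally show ?thesis by (metis zero_complex.sel(1) less_irrefl)
qed

lemma cdel_factor_eq_0_at_levi_null:
  assumes r: "twice_differentiable_at r p" and Q: "twice_differentiable_at Q p" and "r p = 0"
    and r_psd: "hess_psd r p" and rQ_psd: "hess_psd (\<lambda>x. r x * Q x) p"
    and gradient: "(Dz (cf r) p, Dw (cf r) p) \<noteq> (0, 0)"
    and tangent: "cdel r p L = 0" and levi_null: "cHess r p L L = 0"
  shows "cdel Q p L = 0"
proof -
  let ?N = "(cnj (Dz (cf r) p), cnj (Dw (cf r) p))"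
  have "cHess r p L U = 0" for U
    using r_psd levi_null by (rule hess_psd_null_vector)
  then have rQ_L: "cHess (\<lambda>x. r x * Q x) p L U = cdel Q p L * cnj (cdel r p U)" for U
    unfolding cHess_mult_at_zero[OF r Q \<open>r p = 0\<close>] tangent by simp
  have "cHess (\<lambda>x. r x * Q x) p L ?N = 0"
    using rQ_psd by (rule hess_psd_null_vector) (simp add: rQ_L tangent)
  then have "cdel Q p L * (cnj (Dz (cf r) p) * Dz (cf r) p + cnj (Dw (cf r) p) * Dw (cf r) p) = 0"
    by (simp add: rQ_L cdel_def)
  then show ?thesis using cnj_mult_self_add_ne_0[OF gradient] by simp
qed

theorem lemma4p5:
  fixes r X :: "complex \<times> complex \<Rightarrow> real" and K :: real and p :: "complex \<times> complex"
  assumes r_smooth: "smooth r"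
    and r_defining: "\<forall>q. r q = 0 \<longrightarrow> frechet_derivative r (at q) \<noteq> (\<lambda>v. 0)"
    and r_psh_bdry: "\<forall>q. r q = 0 \<longrightarrow> hess_psd r q"
    and X_smooth: "smooth X"
    and p_bdry: "r p = 0"
    and p_weak: "levi r p = 0"
    and rho_psd: "hess_psd (\<lambda>q. r q * (1 + K * r q + X q)) p"
  shows "BP r (\<lambda>q. 1 + X q) p = 0"
proof -
  define P where "P = (\<lambda>q. 1 + X q)"
  define Q where "Q = (\<lambda>q. P q + K * r q)"
  define a b where "a = Dz (cf r) p" and "b = Dw (cf r) p"
  have r2: "twice_differentiable_at r p" and X2: "twice_differentiable_at X p"
    using r_smooth X_smooth by (simp_all add: smooth_imp_twice_differentiable_at)
  then have r1: "r differentiable at p" and P1: "P differentiable at p"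
    by (simp_all add: twice_differentiable_at_imp_differentiable P_def)
  have gradient: "(a, b) \<noteq> (0, 0)"
    using r_defining[rule_format, OF p_bdry] frechet_derivative_eq_0_if_Dz_Dw_eq_0[OF r1]
    by (auto simp: a_def b_def)
  have tangent: "cdel r p (b, - a) = 0"
    by (simp add: cdel_def a_def b_def algebra_simps)
  have "cdel Q p (b, - a) = 0"
  proof (rule cdel_factor_eq_0_at_levi_null[OF r2 _ p_bdry r_psh_bdry[rule_format, OF p_bdry]])
    show "twice_differentiable_at Q p" unfolding Q_def P_def
      by (intro twice_differentiable_at_add twice_differentiable_at_mult twice_differentiable_at_const r2 X2)
    show "hess_psd (\<lambda>x. r x * Q x) p" using rho_psd by (simp add: Q_def P_def algebra_simps)
    show "cHess r p (b, - a) (b, - a) = 0" using p_weak by (simp add: levi_def Lvec_def a_def b_def)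
  qed (use gradient tangent in \<open>simp_all add: a_def b_def\<close>)
  then have "cdel P p (b, - a) = 0"
    using tangent P1 r1 by (simp add: Q_def cdel_add_scaled)
  then have "Dz (cf P) p * b = Dw (cf P) p * a"
    by (simp add: cdel_def)
  with gradient show ?thesis
    using B_form_eq_0_if_proportional P1
    by (simp add: BP_def P_def[symmetric] Dzbar_cf Dwbar_cf r1 a_def[symmetric] b_def[symmetric])
qed

end
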